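(* Let $p_{NS}\in(0,1)$ and let $P$ be a semi-distribution on a finite set $\mathcal{I}$ with $a(P)>p_{NS}$. Consider minimizing $\mathrm{KL}_b(P\|Q)$ over the set $S$ of semi-distributions $Q$ with $a(Q)\le a(P)$ and $\sup(Q)\subseteq\sup(P)$. Then: (1) For any $Q_1\in S$ having an item $i$ with $Q_1(i)\in(0,p_{NS}]$, there is $Q_2\in S$ with $Q_2(j)>p_{NS}$ for all $j\in\sup(Q_2)$ and $\mathrm{KL}_b(P\|Q_2)<\mathrm{KL}_b(P\|Q_1)$. Consequently, it suffices to minimize over $S_2=\{Q\in S: a(Q)=a(P),\ Q(j)>p_{NS}\ \forall j\in\sup(Q)\}$, and $S_2$ is non-empty. (2) The set $S^*\subseteq S_2$ of minimizers of $\mathrm{KL}_b(P\|\cdot)$ is non-empty, and for every $Q^*\in S^*$ there is a multiple $r\ge1$ with $Q^*(i)=r\,P(i)$ for all $i\in\sup(Q^* )$. (3) For any minimizer $Q^*$ and any items $i,j$ with $P(i)<P(j)$: if $Q^*(i)>0$ then $Q^*(j)>0$ (and then $Q^*(j)>Q^*(i)$).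
   Context: A semi-distribution on $\mathcal{I}$ is $W:\mathcal{I}\to[0,1]$ with $a(W):=\sum_iW(i)\le1$ and support $\sup(W)=\{i:W(i)>0\}$. A semi-distribution $P$ is called non-degenerate with respect to $p_{NS}$ if $a(P)>p_{NS}$. Bounded KL: $\mathrm{KL}_b(P\|Q):=\sum_{i\in\sup(P)}P(i)\ln\frac{P(i)}{\max(Q(i),p_{NS})}$. *)

theory Defs
  imports Complex_Main
begin

text \<open>The finite item set is modelled as the universe of a finite type 'i.\<close>

definition mass :: "('i::finite \<Rightarrow> real) \<Rightarrow> real" where
  "mass W = (\<Sum>i\<in>UNIV. W i)"

definition supp :: "('i \<Rightarrow> real) \<Rightarrow> 'i set" where
  "supp W = {i. W i > 0}"

definition semi_dist :: "('i::finite \<Rightarrow> real) \<Rightarrow> bool" where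
  "semi_dist W \<longleftrightarrow> (\<forall>i. 0 \<le> W i \<and> W i \<le> 1) \<and> mass W \<le> 1"

definition KLb :: "real \<Rightarrow> ('i \<Rightarrow> real) \<Rightarrow> ('i \<Rightarrow> real) \<Rightarrow> real" where
  "KLb pNS P Q = (\<Sum>i\<in>supp P. P i * ln (P i / max (Q i) pNS))"

definition feasible :: "('i::finite \<Rightarrow> real) \<Rightarrow> ('i \<Rightarrow> real) set" where
  "feasible P = {Q. semi_dist Q \<and> mass Q \<le> mass P \<and> supp Q \<subseteq> supp P}"

definition feasible2 :: "real \<Rightarrow> ('i::finite \<Rightarrow> real) \<Rightarrow> ('i \<Rightarrow> real) set" where
  "feasible2 pNS P = {Q \<in> feasible P. mass Q = mass P \<and> (\<forall>j\<in>supp Q. Q j > pNS)}"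

definition minimizers :: "real \<Rightarrow> ('i::finite \<Rightarrow> real) \<Rightarrow> ('i \<Rightarrow> real) set" where
  "minimizers pNS P = {Q \<in> feasible P. \<forall>Q'\<in>feasible P. KLb pNS P Q \<le> KLb pNS P Q'}"

end

theory Submission
  imports Defs
begin

text \<open>
  Writing \<open>KLb pNS P Q = \<Sum> P ln P - \<Sum> P ln (max Q pNS)\<close>, minimising the bounded divergence
  means maximising the second sum. For a feasible \<open>Q\<close> put \<open>T = {i. pNS < Q i}\<close>: entries at or
  below \<open>pNS\<close> contribute only \<open>ln pNS\<close>, so their mass is wasted, and by Gibbs' inequality the
  best way to spend mass at most \<open>a(P)\<close> on \<open>T\<close> is proportionally to \<open>P\<close>. Hence every feasible
  \<open>Q\<close> is either the scaled restriction of \<open>P\<close> to \<open>T\<close> or is strictly beaten by some scaled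
  restriction. There are finitely many of these, so a minimiser exists, and every minimiser is
  one of them. Finally, moving the mass of a minimiser from an item \<open>i\<close> to an unused item \<open>j\<close>
  with \<open>P i < P j\<close> would strictly decrease the divergence.
\<close>

lemma gibbs_inequality_strict:
  fixes p x :: "'a \<Rightarrow> real"
  assumes "finite T" and p_pos: "\<forall>i\<in>T. 0 < p i" and x_pos: "\<forall>i\<in>T. 0 < x i"
    and "sum x T \<le> A" and "0 < A" and "\<exists>i\<in>T. x i \<noteq> A / sum p T * p i"
  shows "(\<Sum>i\<in>T. p i * ln (x i)) < (\<Sum>i\<in>T. p i * ln (A / sum p T * p i))"
proof -
  define c where "c = A / sum p T"
  obtain k where k: "k \<in> T" "x k \<noteq> c * p k"
    using assms(6) by (auto simp: c_def)
  have "0 < sum p T"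
    using \<open>finite T\<close> k(1) p_pos by (intro sum_pos) auto
  then have c_pos: "0 < c" and c_sum: "c * sum p T = A"
    using \<open>0 < A\<close> by (simp_all add: c_def)
  have y_pos: "0 < c * p i" if "i \<in> T" for i
    using c_pos p_pos that by simp
  have scale: "p i * ((x i - c * p i) / (c * p i)) = (x i - c * p i) / c" if "i \<in> T" for i
  proof -
    have "p i \<noteq> 0"
      using p_pos that by fastforce
    then show ?thesis
      using c_pos by simp
  qed
  have term_le: "p i * (ln (x i) - ln (c * p i)) \<le> (x i - c * p i) / c" if "i \<in> T" for i
  proof -
    have "ln (x i) - ln (c * p i) \<le> (x i - c * p i) / (c * p i)"
      using ln_diff_le x_pos y_pos that by simp
    then have "p i * (ln (x i) - ln (c * p i)) \<le> p i * ((x i - c * p i) / (c * p i))"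
      using p_pos that by (intro mult_left_mono) auto
    then show ?thesis
      using scale that by simp
  qed
  have term_less: "p k * (ln (x k) - ln (c * p k)) < (x k - c * p k) / c"
  proof -
    have "ln (x k) - ln (c * p k) < (x k - c * p k) / (c * p k)"
      using ln_diff_less x_pos y_pos k by simp
    then have "p k * (ln (x k) - ln (c * p k)) < p k * ((x k - c * p k) / (c * p k))"
      using p_pos k(1) by (intro mult_strict_left_mono) auto
    then show ?thesis
      using scale k(1) by simp
  qed
  have "(\<Sum>i\<in>T. p i * (ln (x i) - ln (c * p i))) < (\<Sum>i\<in>T. (x i - c * p i) / c)"
    using \<open>finite T\<close> term_le term_less k(1) by (intro sum_strict_mono_ex1) auto
  also have "\<dots> = (sum x T - A) / c"
    by (simp add: sum_divide_distrib[symmetric] sum_subtractf sum_distrib_left[symmetric] c_sum)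
  also have "\<dots> \<le> 0"
    using \<open>sum x T \<le> A\<close> c_pos by (simp add: divide_nonpos_pos)
  finally show ?thesis
    by (simp add: c_def right_diff_distrib sum_subtractf)
qed

lemma sum_diff_agree_outside:
  fixes f g :: "'a \<Rightarrow> 'b::ab_group_add"
  assumes "finite S" and "D \<subseteq> S" and "\<forall>k\<in>S - D. f k = g k"
  shows "sum f S - sum g S = sum f D - sum g D"
proof -
  have "sum f (S - D) = sum g (S - D)"
    using assms(3) by (intro sum.cong) auto
  then show ?thesis
    using sum.subset_diff[OF assms(2,1), of f] sum.subset_diff[OF assms(2,1), of g] by simp
qed

lemma sum_le_mass: "(\<And>i. 0 \<le> W i) \<Longrightarrow> sum W T \<le> mass W"
  unfolding mass_def by (rule sum_mono2) auto

lemma supp_nonempty_if_mass_pos: "0 < mass W \<Longrightarrow> supp W \<noteq> {}"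
  unfolding mass_def supp_def by (metis empty_Collect_eq not_le sum_nonpos)

lemma semi_dist_nonneg: "semi_dist W \<Longrightarrow> 0 \<le> W i"
  by (simp add: semi_dist_def)

lemma feasible_nonneg: "Q \<in> feasible P \<Longrightarrow> 0 \<le> Q i"
  by (simp add: feasible_def semi_dist_def)

lemma feasible_sum_le: "Q \<in> feasible P \<Longrightarrow> sum Q T \<le> mass P"
  using sum_le_mass[of Q T] feasible_nonneg[of Q P] by (force simp: feasible_def)

lemma feasible_move_mass:
  assumes Q: "Q \<in> feasible P" and "j \<in> supp P" "Q j = 0" "i \<noteq> j"
  shows "Q(i := 0, j := Q i) \<in> feasible P"
proof -
  let ?Q' = "Q(i := 0, j := Q i)"
  have "mass ?Q' - mass Q = sum ?Q' {i, j} - sum Q {i, j}"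
    unfolding mass_def by (rule sum_diff_agree_outside) auto
  then have "mass ?Q' = mass Q"
    using assms(3,4) by simp
  moreover have "supp ?Q' \<subseteq> supp P"
    using Q \<open>j \<in> supp P\<close> by (auto simp: feasible_def supp_def)
  ultimately show ?thesis
    using Q by (auto simp: feasible_def semi_dist_def)
qed

definition scaled_restriction :: "('i::finite \<Rightarrow> real) \<Rightarrow> 'i set \<Rightarrow> 'i \<Rightarrow> real" where
  "scaled_restriction P T i = (if i \<in> T then mass P / sum P T * P i else 0)"

context
  fixes P :: "'i::finite \<Rightarrow> real" and T :: "'i set"
  assumes semi_dist_P: "semi_dist P" and T_supp: "T \<subseteq> supp P" and T_ne: "T \<noteq> {}"
begin

lemma sum_restricted_pos: "0 < sum P T"
  using T_supp T_ne by (intro sum_pos) (auto simp: supp_def)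

lemma scaled_restriction_factor_ge_1: "1 \<le> mass P / sum P T"
  using sum_restricted_pos sum_le_mass[OF semi_dist_nonneg[OF semi_dist_P]] by simp

lemma supp_scaled_restriction: "supp (scaled_restriction P T) = T"
proof -
  have "0 < mass P / sum P T * P i" if "i \<in> T" for i
    using scaled_restriction_factor_ge_1 T_supp that by (auto simp: supp_def simp del: times_divide_eq_left)
  then show ?thesis
    by (auto simp: supp_def scaled_restriction_def simp del: times_divide_eq_left)
qed

lemma sum_scaled_restriction: "sum (scaled_restriction P T) T = mass P"
  using sum_restricted_pos
  by (simp add: scaled_restriction_def sum_divide_distrib[symmetric] sum_distrib_left[symmetric])

lemma mass_scaled_restriction: "mass (scaled_restriction P T) = mass P"
proof -
  have "sum (scaled_restriction P T) T = sum (scaled_restriction P T) UNIV"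
    by (rule sum.mono_neutral_left) (auto simp: scaled_restriction_def)
  then show ?thesis
    using sum_scaled_restriction by (simp add: mass_def)
qed

lemma scaled_restriction_feasible: "scaled_restriction P T \<in> feasible P"
proof -
  have nonneg: "0 \<le> scaled_restriction P T i" for i
    using scaled_restriction_factor_ge_1 semi_dist_nonneg[OF semi_dist_P]
    by (simp add: scaled_restriction_def del: times_divide_eq_left)
  have "scaled_restriction P T i \<le> 1" for i
  proof -
    have "sum (scaled_restriction P T) {i} \<le> mass (scaled_restriction P T)"
      using sum_le_mass[OF nonneg] .
    then show ?thesis
      using mass_scaled_restriction semi_dist_P by (simp add: semi_dist_def)
  qed
  then show ?thesis
    using nonneg semi_dist_P mass_scaled_restriction supp_scaled_restriction T_supp
    unfolding feasible_def semi_dist_def by simp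
qed

lemma scaled_restriction_eqI:
  assumes Q: "Q \<in> feasible P" and agree: "\<forall>i\<in>T. Q i = scaled_restriction P T i"
  shows "Q = scaled_restriction P T"
proof
  fix k
  show "Q k = scaled_restriction P T k"
  proof (cases "k \<in> T")
    case False
    have "sum Q T = mass P"
      using agree sum_scaled_restriction by simp
    then have "Q k \<le> 0"
      using feasible_sum_le[OF Q, of "insert k T"] False by simp
    then show ?thesis
      using feasible_nonneg[OF Q, of k] False by (simp add: scaled_restriction_def)
  qed (use agree in blast)
qed

end

definition bounded_loglik :: "real \<Rightarrow> ('i \<Rightarrow> real) \<Rightarrow> ('i \<Rightarrow> real) \<Rightarrow> real" where
  "bounded_loglik pNS P Q = (\<Sum>i\<in>supp P. P i * ln (max (Q i) pNS))"

context
  fixes pNS :: real and P :: "'i::finite \<Rightarrow> real"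
  assumes pNS_pos: "0 < pNS" and semi_dist_P: "semi_dist P" and non_degenerate: "pNS < mass P"
begin

lemma KLb_less_iff: "KLb pNS P Q < KLb pNS P Q' \<longleftrightarrow> bounded_loglik pNS P Q' < bounded_loglik pNS P Q"
proof -
  have "KLb pNS P Q = (\<Sum>i\<in>supp P. P i * ln (P i)) - bounded_loglik pNS P Q" for Q
    unfolding KLb_def bounded_loglik_def sum_subtractf[symmetric]
    using pNS_pos by (intro sum.cong) (auto simp: supp_def ln_div right_diff_distrib)
  then show ?thesis
    by simp
qed

lemma bounded_loglik_split:
  assumes "T \<subseteq> supp P" and "\<forall>i\<in>supp P - T. Q i \<le> pNS"
  shows "bounded_loglik pNS P Q = (\<Sum>i\<in>T. P i * ln (max (Q i) pNS)) + (\<Sum>i\<in>supp P - T. P i * ln pNS)"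
proof -
  have "(\<Sum>i\<in>supp P - T. P i * ln (max (Q i) pNS)) = (\<Sum>i\<in>supp P - T. P i * ln pNS)"
    using assms(2) by (intro sum.cong) auto
  then show ?thesis
    unfolding bounded_loglik_def sum.subset_diff[OF assms(1) finite] by simp
qed

lemma above_threshold_subset_supp:
  assumes "Q \<in> feasible P"
  shows "{i. pNS < Q i} \<subseteq> supp P"
proof -
  have "{i. pNS < Q i} \<subseteq> supp Q"
    using pNS_pos by (auto simp: supp_def)
  then show ?thesis
    using assms by (auto simp: feasible_def)
qed

lemma bounded_loglik_less_scaled_restriction:
  assumes Q: "Q \<in> feasible P" and ne: "{i. pNS < Q i} \<noteq> {}"
    and not_scaled: "Q \<noteq> scaled_restriction P {i. pNS < Q i}"
  shows "bounded_loglik pNS P Q < bounded_loglik pNS P (scaled_restriction P {i. pNS < Q i})"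
proof -
  define T where "T = {i. pNS < Q i}"
  define C where "C = scaled_restriction P T"
  have T_supp: "T \<subseteq> supp P" and T_ne: "T \<noteq> {}"
    using above_threshold_subset_supp[OF Q] ne by (simp_all add: T_def)
  have P_pos: "\<forall>i\<in>T. 0 < P i" and Q_pos: "\<forall>i\<in>T. 0 < Q i"
    using T_supp pNS_pos by (auto simp: supp_def T_def)
  have C_on_T: "\<forall>i\<in>T. C i = mass P / sum P T * P i"
    by (simp add: C_def scaled_restriction_def)
  have "\<exists>i\<in>T. Q i \<noteq> C i"
    using scaled_restriction_eqI[OF semi_dist_P T_supp T_ne Q] not_scaled by (auto simp: C_def T_def)
  moreover have "sum Q T \<le> mass P"
    using feasible_sum_le[OF Q] .
  moreover have "0 < mass P"
    using pNS_pos non_degenerate by simp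
  ultimately have gibbs: "(\<Sum>i\<in>T. P i * ln (Q i)) < (\<Sum>i\<in>T. P i * ln (C i))"
    using gibbs_inequality_strict[OF _ P_pos Q_pos] C_on_T by simp
  have C_pos: "\<forall>i\<in>T. 0 < C i"
    using supp_scaled_restriction[OF semi_dist_P T_supp T_ne] by (auto simp: C_def supp_def)
  let ?rest = "\<Sum>i\<in>supp P - T. P i * ln pNS"
  have "bounded_loglik pNS P Q = (\<Sum>i\<in>T. P i * ln (max (Q i) pNS)) + ?rest"
    using bounded_loglik_split[OF T_supp] by (simp add: T_def)
  also have "\<dots> = (\<Sum>i\<in>T. P i * ln (Q i)) + ?rest"
    by (simp add: T_def)
  also have "\<dots> < (\<Sum>i\<in>T. P i * ln (C i)) + ?rest"
    using gibbs by simp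
  also have "\<dots> \<le> (\<Sum>i\<in>T. P i * ln (max (C i) pNS)) + ?rest"
    using P_pos C_pos by (auto intro!: sum_mono mult_left_mono)
  also have "\<dots> = bounded_loglik pNS P C"
    using bounded_loglik_split[OF T_supp] pNS_pos by (simp add: C_def scaled_restriction_def)
  finally show ?thesis
    by (simp add: C_def T_def)
qed

lemma supp_nonempty: "supp P \<noteq> {}"
  using pNS_pos non_degenerate by (intro supp_nonempty_if_mass_pos) simp

lemma bounded_loglik_less_scaled_singleton:
  assumes below: "{i. pNS < Q i} = {}" and j: "j \<in> supp P"
  shows "bounded_loglik pNS P Q < bounded_loglik pNS P (scaled_restriction P {j})"
proof -
  let ?C = "scaled_restriction P {j}"
  let ?rest = "\<Sum>i\<in>supp P - {j}. P i * ln pNS"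
  have P_j: "0 < P j"
    using j by (simp add: supp_def)
  have "bounded_loglik pNS P Q = P j * ln (max (Q j) pNS) + ?rest"
    using bounded_loglik_split[of "{j}" Q] j below by (simp add: not_less)
  also have "\<dots> = P j * ln pNS + ?rest"
    using below by (simp add: not_less max_def)
  also have "\<dots> < P j * ln (mass P) + ?rest"
    using P_j pNS_pos non_degenerate by simp
  also have "\<dots> = bounded_loglik pNS P ?C"
    using bounded_loglik_split[of "{j}" ?C] j P_j pNS_pos non_degenerate
    by (simp add: scaled_restriction_def)
  finally show ?thesis .
qed

lemma scaled_restriction_improves:
  assumes Q: "Q \<in> feasible P"
    and "{i. pNS < Q i} = {} \<or> Q \<noteq> scaled_restriction P {i. pNS < Q i}"
  obtains T where "T \<subseteq> supp P" "T \<noteq> {}" "KLb pNS P (scaled_restriction P T) < KLb pNS P Q"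
proof (cases "{i. pNS < Q i} = {}")
  case True
  obtain j where "j \<in> supp P"
    using supp_nonempty by blast
  then show ?thesis
    using that bounded_loglik_less_scaled_singleton[OF True] KLb_less_iff by blast
next
  case False
  with assms have "Q \<noteq> scaled_restriction P {i. pNS < Q i}"
    by blast
  with False show ?thesis
    using that above_threshold_subset_supp[OF Q] bounded_loglik_less_scaled_restriction[OF Q]
    by (simp add: KLb_less_iff)
qed

lemma minimizer_eq_scaled_restriction:
  assumes "Qs \<in> minimizers pNS P"
  obtains T where "T \<subseteq> supp P" "T \<noteq> {}" "T = {i. pNS < Qs i}" "Qs = scaled_restriction P T"
proof -
  have Qs: "Qs \<in> feasible P" and least: "\<forall>Q\<in>feasible P. KLb pNS P Qs \<le> KLb pNS P Q"
    using assms by (simp_all add: minimizers_def)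
  have "\<not> ({i. pNS < Qs i} = {} \<or> Qs \<noteq> scaled_restriction P {i. pNS < Qs i})"
  proof
    assume "{i. pNS < Qs i} = {} \<or> Qs \<noteq> scaled_restriction P {i. pNS < Qs i}"
    then obtain T where T: "T \<subseteq> supp P" "T \<noteq> {}"
      and "KLb pNS P (scaled_restriction P T) < KLb pNS P Qs"
      by (rule scaled_restriction_improves[OF Qs])
    then show False
      using least scaled_restriction_feasible[OF semi_dist_P T] by fastforce
  qed
  then show ?thesis
    using that above_threshold_subset_supp[OF Qs] by blast
qed

lemma minimizers_nonempty: "minimizers pNS P \<noteq> {}"
proof -
  define F where "F = scaled_restriction P ` {T. T \<subseteq> supp P \<and> T \<noteq> {}}"
  have F_feasible: "F \<subseteq> feasible P"
    using scaled_restriction_feasible[OF semi_dist_P] by (auto simp: F_def)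
  have "finite F" and "F \<noteq> {}"
    using supp_nonempty by (auto simp: F_def)
  define m where "m = arg_min_on (KLb pNS P) F"
  have m: "m \<in> F"
    unfolding m_def using \<open>finite F\<close> \<open>F \<noteq> {}\<close> by (rule arg_min_if_finite(1))
  have m_least: "KLb pNS P m \<le> KLb pNS P Q" if "Q \<in> F" for Q
    unfolding m_def using \<open>finite F\<close> \<open>F \<noteq> {}\<close> that by (rule arg_min_least)
  have "KLb pNS P m \<le> KLb pNS P Q" if Q: "Q \<in> feasible P" for Q
  proof (cases "{i. pNS < Q i} = {} \<or> Q \<noteq> scaled_restriction P {i. pNS < Q i}")
    case True
    then obtain T where "T \<subseteq> supp P" "T \<noteq> {}" "KLb pNS P (scaled_restriction P T) < KLb pNS P Q"
      using scaled_restriction_improves[OF Q] by blast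
    then show ?thesis
      using m_least[of "scaled_restriction P T"] by (force simp: F_def)
  next
    case False
    then have "Q \<in> F"
      using above_threshold_subset_supp[OF Q] by (auto simp: F_def)
    then show ?thesis
      by (rule m_least)
  qed
  then have "m \<in> minimizers pNS P"
    using m F_feasible by (auto simp: minimizers_def)
  then show ?thesis
    by blast
qed

lemma minimizers_subset_feasible2: "minimizers pNS P \<subseteq> feasible2 pNS P"
proof
  fix Qs
  assume Qs: "Qs \<in> minimizers pNS P"
  then obtain T where T: "T \<subseteq> supp P" "T \<noteq> {}" "T = {i. pNS < Qs i}"
    and Qs_eq: "Qs = scaled_restriction P T"
    by (rule minimizer_eq_scaled_restriction)
  have "supp Qs = T" and "mass Qs = mass P"
    using supp_scaled_restriction[OF semi_dist_P T(1,2)] mass_scaled_restriction[OF semi_dist_P T(1,2)]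
    by (simp_all add: Qs_eq)
  then show "Qs \<in> feasible2 pNS P"
    using Qs T(3) by (auto simp: feasible2_def minimizers_def)
qed

lemma minimizer_proportional:
  assumes "Qs \<in> minimizers pNS P"
  shows "\<exists>r\<ge>1. \<forall>i\<in>supp Qs. Qs i = r * P i"
proof -
  obtain T where T: "T \<subseteq> supp P" "T \<noteq> {}" and Qs_eq: "Qs = scaled_restriction P T"
    using assms by (rule minimizer_eq_scaled_restriction)
  then have "\<forall>i\<in>supp Qs. Qs i = mass P / sum P T * P i"
    using supp_scaled_restriction[OF semi_dist_P T] by (simp add: scaled_restriction_def)
  then show ?thesis
    using scaled_restriction_factor_ge_1[OF semi_dist_P T] by blast
qed

lemma minimizer_supp_upward_closed:
  assumes min: "Qs \<in> minimizers pNS P" and P_less: "P i < P j" and "0 < Qs i"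
  shows "0 < Qs j"
proof (rule ccontr)
  assume "\<not> 0 < Qs j"
  have Qs: "Qs \<in> feasible P" and least: "\<forall>Q\<in>feasible P. KLb pNS P Qs \<le> KLb pNS P Q"
    using min by (simp_all add: minimizers_def)
  then have Qs_j: "Qs j = 0"
    using \<open>\<not> 0 < Qs j\<close> feasible_nonneg by (metis less_eq_real_def)
  have "i \<in> supp Qs"
    using \<open>0 < Qs i\<close> by (simp add: supp_def)
  then have Qs_i: "pNS < Qs i" and i: "i \<in> supp P"
    using min minimizers_subset_feasible2 by (auto simp: feasible2_def feasible_def)
  have j: "j \<in> supp P" and "i \<noteq> j"
    using P_less semi_dist_nonneg[OF semi_dist_P, of i] by (auto simp: supp_def)
  let ?Q' = "Qs(i := 0, j := Qs i)"
  have "bounded_loglik pNS P ?Q' - bounded_loglik pNS P Qs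
      = (\<Sum>k\<in>{i, j}. P k * ln (max (?Q' k) pNS)) - (\<Sum>k\<in>{i, j}. P k * ln (max (Qs k) pNS))"
    unfolding bounded_loglik_def using i j by (intro sum_diff_agree_outside) auto
  also have "\<dots> = (P j - P i) * (ln (Qs i) - ln pNS)"
    using \<open>i \<noteq> j\<close> Qs_i Qs_j pNS_pos by (simp add: max_def algebra_simps)
  also have "\<dots> > 0"
    using P_less Qs_i pNS_pos by simp
  finally have "KLb pNS P ?Q' < KLb pNS P Qs"
    by (simp add: KLb_less_iff)
  then show False
    using least feasible_move_mass[OF Qs j Qs_j \<open>i \<noteq> j\<close>] by fastforce
qed

lemma minimizer_strict_mono:
  assumes Qs: "Qs \<in> minimizers pNS P" and "P i < P j" "0 < Qs i"
  shows "Qs i < Qs j"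
proof -
  have "i \<in> supp Qs" "j \<in> supp Qs"
    using assms minimizer_supp_upward_closed by (auto simp: supp_def)
  moreover obtain r where "1 \<le> r" "\<forall>k\<in>supp Qs. Qs k = r * P k"
    using minimizer_proportional[OF Qs] by blast
  ultimately show ?thesis
    using \<open>P i < P j\<close> by simp
qed

lemma feasible2_improves_low_entry:
  assumes Q: "Q \<in> feasible P" and "0 < Q i" "Q i \<le> pNS"
  obtains Q' where "Q' \<in> feasible2 pNS P" "KLb pNS P Q' < KLb pNS P Q"
proof -
  have "Q \<noteq> scaled_restriction P {k. pNS < Q k}"
    using assms by (auto simp: scaled_restriction_def fun_eq_iff intro!: exI[of _ i])
  then obtain T where T: "T \<subseteq> supp P" "T \<noteq> {}"
    and better: "KLb pNS P (scaled_restriction P T) < KLb pNS P Q"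
    using scaled_restriction_improves[OF Q] by blast
  obtain m where m: "m \<in> minimizers pNS P"
    using minimizers_nonempty by blast
  then have "KLb pNS P m \<le> KLb pNS P (scaled_restriction P T)"
    using scaled_restriction_feasible[OF semi_dist_P T] by (simp add: minimizers_def)
  then show ?thesis
    using that m minimizers_subset_feasible2 better by fastforce
qed

end

theorem lemma8:
  fixes pNS :: real and P :: "'i::finite \<Rightarrow> real"
  assumes "0 < pNS" and "pNS < 1"
    and "semi_dist P" and "mass P > pNS"
  shows "(\<forall>Q1\<in>feasible P. (\<exists>i. 0 < Q1 i \<and> Q1 i \<le> pNS) \<longrightarrow>
            (\<exists>Q2\<in>feasible P. (\<forall>j\<in>supp Q2. Q2 j > pNS) \<and> KLb pNS P Q2 < KLb pNS P Q1))
       \<and> (\<forall>Q\<in>feasible P. \<exists>Q'\<in>feasible2 pNS P. KLb pNS P Q' \<le> KLb pNS P Q)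
       \<and> feasible2 pNS P \<noteq> {}
       \<and> minimizers pNS P \<noteq> {}
       \<and> minimizers pNS P \<subseteq> feasible2 pNS P
       \<and> (\<forall>Qs\<in>minimizers pNS P. \<exists>r\<ge>1. \<forall>i\<in>supp Qs. Qs i = r * P i)
       \<and> (\<forall>Qs\<in>minimizers pNS P. \<forall>i j. P i < P j \<longrightarrow> Qs i > 0 \<longrightarrow> Qs j > 0 \<and> Qs j > Qs i)"
proof -
  note setting = assms(1,3,4)
  note min_feasible2 = minimizers_subset_feasible2[OF setting]
  obtain m where m: "m \<in> minimizers pNS P"
    using minimizers_nonempty[OF setting] by blast
  then have m_feasible2: "m \<in> feasible2 pNS P"
    using min_feasible2 by blast
  have "\<exists>Q2\<in>feasible P. (\<forall>j\<in>supp Q2. Q2 j > pNS) \<and> KLb pNS P Q2 < KLb pNS P Q1"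
    if "Q1 \<in> feasible P" "0 < Q1 i" "Q1 i \<le> pNS" for Q1 i
    using feasible2_improves_low_entry[OF setting that] by (auto simp: feasible2_def)
  moreover have "\<forall>Q\<in>feasible P. KLb pNS P m \<le> KLb pNS P Q"
    using m by (simp add: minimizers_def)
  ultimately show ?thesis
    using m m_feasible2 min_feasible2 minimizer_proportional[OF setting]
      minimizer_strict_mono[OF setting] by (blast intro: less_trans)
qed

end
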